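(* Let $SA_{106} = 224{,}403{,}121{,}196{,}654{,}400$, $SA_{107} = 448{,}806{,}242{,}393{,}308{,}800$ and $N_{15} = 614{,}889{,}782{,}588{,}491{,}410$. The only integers $n$ in the open interval $(SA_{107}, N_{15})$ satisfying \[ \frac{\sigma(n)}{n} > \frac{\sigma(SA_{106})}{SA_{106}} \] are $n_1 = 497{,}325{,}836{,}165{,}558{,}400$ and $n_2 = 521{,}585{,}633{,}051{,}683{,}200$.
   Context: $\sigma(n)$ is the sum of the positive divisors of $n$. $SA_{106}$ and $SA_{107}$ are the $106$th and $107$th superabundant numbers (a positive integer $N$ is superabundant if $\sigma(m)/m<\sigma(N)/N$ for all $0<m<N$), and $N_{15}$ is the product of the first $15$ primes. *)

theory Defs
  imports Complex_Main "HOL-Computational_Algebra.Primes"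
begin

definition sigma :: "nat \<Rightarrow> nat" where
  "sigma n = (\<Sum>d\<in>{d. d dvd n \<and> 0 < d}. d)"

end

theory Submission
  imports Defs
begin

text \<open>
  For k > 0 the weight \<open>(sigma n / n) ^ k / n\<close> is multiplicative, and along the powers
  \<open>p ^ a\<close> of a fixed prime it is log-concave in \<open>a\<close>. For k = 144 every local factor is
  maximal at the exponent of p in SA106, so SA106 maximises the weight. If \<open>n < N15\<close> and
  \<open>sigma n / n > sigma SA106 / SA106\<close>, then the weight of n exceeds SA106 / N15 times that of
  SA106; as all local factors of n are at most those of SA106, none of them can drop below
  SA106 / N15 times its maximum. By log-concavity this confines every exponent of n to a short
  window around the exponent in SA106, which is certified by rounded computations at the two
  ends of the window. The 768 exponent vectors in the windows are then enumerated.
\<close>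

section \<open>Divisor sums\<close>

lemma finite_pos_divisors: "0 < n \<Longrightarrow> finite {d::nat. d dvd n \<and> 0 < d}"
  by (rule finite_subset[OF _ finite_divisors_nat]) auto

lemma sigma_1: "sigma 1 = 1"
proof -
  have "{d::nat. d dvd 1 \<and> 0 < d} = {1}" by auto
  then show ?thesis unfolding sigma_def by simp
qed

lemma sigma_pos: "0 < n \<Longrightarrow> 0 < sigma n"
  unfolding sigma_def by (rule sum_pos2[where i = 1]) (auto simp: finite_pos_divisors)

lemma sigma_mult:
  fixes m n :: nat
  assumes "coprime m n" "0 < m" "0 < n"
  shows "sigma (m * n) = sigma m * sigma n"
proof -
  let ?Dm = "{d. d dvd m \<and> 0 < d}" and ?Dn = "{d. d dvd n \<and> 0 < d}"
  let ?mult = "\<lambda>(a, b). a * b :: nat"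
  have inj: "inj_on ?mult (?Dm \<times> ?Dn)"
  proof (rule inj_onI, clarify)
    fix a b a' b' :: nat
    assume eq: "a * b = a' * b'" and "a dvd m" "b dvd n" "a' dvd m" "b' dvd n" and "0 < a"
    then have "coprime a b'" "coprime a' b"
      using assms(1) coprime_divisors by blast+
    then have "a dvd a'" "a' dvd a"
      using eq by (metis coprime_dvd_mult_left_iff dvd_triv_left)+
    then have "a = a'" by (rule dvd_antisym)
    with eq \<open>0 < a\<close> show "a = a' \<and> b = b'" by simp
  qed
  have "?mult ` (?Dm \<times> ?Dn) = {d. d dvd m * n \<and> 0 < d}"
  proof (intro equalityI subsetI)
    fix d assume "d \<in> {d. d dvd m * n \<and> 0 < d}"
    then obtain a b where "d = a * b" "a dvd m" "b dvd n" "0 < d"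
      using division_decomp by blast
    then show "d \<in> ?mult ` (?Dm \<times> ?Dn)"
      by (auto intro!: image_eqI[of _ _ "(a, b)"])
  qed (auto intro: mult_dvd_mono)
  then have "sigma (m * n) = (\<Sum>x\<in>?Dm \<times> ?Dn. ?mult x)"
    unfolding sigma_def using sum.reindex[OF inj, of "\<lambda>d. d"] by simp
  also have "\<dots> = sigma m * sigma n"
    unfolding sigma_def by (simp add: sum_product sum.cartesian_product)
  finally show ?thesis .
qed

lemma sigma_prime_power:
  fixes p :: nat
  assumes "prime p"
  shows "sigma (p ^ a) = (\<Sum>i\<le>a. p ^ i)"
proof -
  have "{d. d dvd p ^ a \<and> 0 < d} = (\<lambda>i. p ^ i) ` {..a}"
    using assms by (auto simp: divides_primepow_nat prime_gt_0_nat)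
  moreover have "inj_on (\<lambda>i. p ^ i) {..a}"
    using prime_gt_1_nat[OF assms] by (intro inj_onI) simp
  ultimately show ?thesis
    unfolding sigma_def by (simp add: sum.reindex)
qed

lemma sigma_prime_power_Suc:
  fixes p :: nat
  assumes "prime p"
  shows "sigma (p ^ Suc a) = sigma (p ^ a) + p ^ Suc a"
  unfolding sigma_prime_power[OF assms] by simp

lemma sigma_prime_power_Suc':
  fixes p :: nat
  assumes "prime p"
  shows "sigma (p ^ Suc a) = p * sigma (p ^ a) + 1"
  unfolding sigma_prime_power[OF assms]
  by (simp add: sum.atMost_Suc_shift sum_distrib_left del: sum.atMost_Suc)

lemma sigma_prime_power_eq_div:
  fixes p :: nat
  assumes "prime p"
  shows "sigma (p ^ a) = (p ^ Suc a - 1) div (p - 1)"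
proof -
  have "sigma (p ^ a) * p + 1 = sigma (p ^ a) + p ^ Suc a"
    using sigma_prime_power_Suc[OF assms] sigma_prime_power_Suc'[OF assms] by (simp add: mult.commute)
  then have "p ^ Suc a - 1 = sigma (p ^ a) * (p - 1)"
    by (simp add: diff_mult_distrib2)
  moreover have "0 < p - 1" using prime_gt_1_nat[OF assms] by simp
  ultimately show ?thesis by simp
qed

lemma sigma_prime_power_log_concave:
  fixes p :: nat
  assumes "prime p"
  shows "sigma (p ^ a) * sigma (p ^ (a + 2)) + p ^ (a + 1) = sigma (p ^ (a + 1)) ^ 2"
proof -
  let ?s = "\<lambda>i. sigma (p ^ i)"
  have s1: "?s (a + 1) = ?s a + p ^ (a + 1)"
    using sigma_prime_power_Suc[OF assms, of a] by simp
  have s1': "?s (a + 1) = p * ?s a + 1"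
    using sigma_prime_power_Suc'[OF assms, of a] by simp
  have s2: "?s (a + 2) = p * ?s (a + 1) + 1"
    using sigma_prime_power_Suc'[OF assms, of "a + 1"] by simp
  have "?s (a + 1) ^ 2 = ?s (a + 1) * (p * ?s a + 1)"
    by (simp only: power2_eq_square s1'[symmetric])
  also have "\<dots> = p * ?s a * ?s (a + 1) + (?s a + p ^ (a + 1))"
    unfolding s1 by (simp add: algebra_simps)
  also have "\<dots> = ?s a * ?s (a + 2) + p ^ (a + 1)"
    unfolding s2 by (simp add: algebra_simps)
  finally show ?thesis by simp
qed

lemma multiplicative_prod_list_prime_powers:
  fixes f :: "nat \<Rightarrow> 'a::comm_monoid_mult"
  assumes f_mult: "\<And>m n. coprime m n \<Longrightarrow> 0 < m \<Longrightarrow> 0 < n \<Longrightarrow> f (m * n) = f m * f n"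
    and f_1: "f 1 = 1"
    and "distinct ps" "\<forall>p\<in>set ps. prime p"
  shows "f (\<Prod>(p, a)\<leftarrow>zip ps es. p ^ a) = (\<Prod>(p, a)\<leftarrow>zip ps es. f (p ^ a))"
  using assms(3,4)
proof (induction ps arbitrary: es)
  case (Cons q ps)
  show ?case
  proof (cases es)
    case (Cons b es')
    let ?rest = "\<Prod>(p, a)\<leftarrow>zip ps es'. p ^ a"
    have "coprime (q ^ b) ?rest"
      using Cons.prems
      by (intro prod_list_coprime_right) (auto dest!: set_zip_leftD, metis primes_coprime)
    moreover have "?rest \<noteq> 0"
      using Cons.prems by (auto simp: prod_list_zero_iff dest!: set_zip_leftD)
    moreover have "0 < q ^ b"
      using Cons.prems by (simp add: prime_gt_0_nat)
    ultimately show ?thesis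
      using Cons.prems Cons.IH \<open>es = b # es'\<close> by (simp add: f_mult)
  qed (use f_1 in simp)
qed (use f_1 in simp)

lemma multiplicative_prod_prime_powers:
  fixes f :: "nat \<Rightarrow> 'a::comm_monoid_mult"
  assumes "\<And>m n. coprime m n \<Longrightarrow> 0 < m \<Longrightarrow> 0 < n \<Longrightarrow> f (m * n) = f m * f n"
    and "f 1 = 1" "finite P" "\<forall>p\<in>P. prime p"
  shows "f (\<Prod>p\<in>P. p ^ e p) = (\<Prod>p\<in>P. f (p ^ e p))"
proof -
  obtain ps where ps: "set ps = P" "distinct ps"
    using finite_distinct_list[OF assms(3)] by blast
  have "zip ps (map e ps) = map (\<lambda>p. (p, e p)) ps"
    by (induction ps) simp_all
  then show ?thesis
    using multiplicative_prod_list_prime_powers[OF assms(1,2) ps(2), of "map e ps"] assms(4)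
    unfolding ps(1)[symmetric] by (simp add: prod.distinct_set_conv_list[OF ps(2)] comp_def)
qed

lemma sigma_prod_list_prime_powers:
  assumes "distinct ps" "\<forall>p\<in>set ps. prime p"
  shows "sigma (\<Prod>(p, a)\<leftarrow>zip ps es. p ^ a) = (\<Prod>(p, a)\<leftarrow>zip ps es. (p ^ Suc a - 1) div (p - 1))"
proof -
  have "sigma (\<Prod>(p, a)\<leftarrow>zip ps es. p ^ a) = (\<Prod>(p, a)\<leftarrow>zip ps es. sigma (p ^ a))"
    by (rule multiplicative_prod_list_prime_powers[OF sigma_mult sigma_1 assms])
  also have "\<dots> = (\<Prod>(p, a)\<leftarrow>zip ps es. (p ^ Suc a - 1) div (p - 1))"
    using assms(2)
    by (intro arg_cong[where f = prod_list] map_cong) (auto dest!: set_zip_leftD simp: sigma_prime_power_eq_div)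
  finally show ?thesis .
qed

lemma prime_factorization_superset:
  fixes n :: nat
  assumes "0 < n" "finite P" "\<forall>p\<in>P. prime p" "prime_factors n \<subseteq> P"
  shows "n = (\<Prod>p\<in>P. p ^ multiplicity p n)"
proof -
  have "n = (\<Prod>p\<in>prime_factors n. p ^ multiplicity p n)"
    using prime_factorization_nat[OF assms(1)] .
  also have "\<dots> = (\<Prod>p\<in>P. p ^ multiplicity p n)"
    using assms by (intro prod.mono_neutral_left) (auto simp: prime_factors_multiplicity)
  finally show ?thesis .
qed

section \<open>Abundancy and the weight of colossally abundant numbers\<close>

definition abundancy :: "nat \<Rightarrow> real" where
  "abundancy n = real (sigma n) / real n"

text \<open>\<open>ca_weight k n = (sigma n / n ^ (1 + 1 / k)) ^ k\<close> is maximised by the colossally abundant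
  numbers with parameter \<open>1 / k\<close>.\<close>
definition ca_weight :: "nat \<Rightarrow> nat \<Rightarrow> real" where
  "ca_weight k n = abundancy n ^ k / real n"

lemma abundancy_1: "abundancy 1 = 1"
  unfolding abundancy_def sigma_1 by simp

lemma abundancy_pos: "0 < n \<Longrightarrow> 0 < abundancy n"
  by (simp add: abundancy_def sigma_pos)

lemma abundancy_mult:
  "coprime m n \<Longrightarrow> 0 < m \<Longrightarrow> 0 < n \<Longrightarrow> abundancy (m * n) = abundancy m * abundancy n"
  by (simp add: abundancy_def sigma_mult)

lemma abundancy_less_iff:
  "0 < m \<Longrightarrow> 0 < n \<Longrightarrow> abundancy m < abundancy n \<longleftrightarrow> sigma m * n < sigma n * m"
  unfolding abundancy_def by (simp add: divide_simps flip: of_nat_mult)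

lemma ca_weight_1: "ca_weight k 1 = 1"
  unfolding ca_weight_def abundancy_1 by simp

lemma ca_weight_pos: "0 < n \<Longrightarrow> 0 < ca_weight k n"
  by (simp add: ca_weight_def abundancy_pos)

lemma ca_weight_mult:
  "coprime m n \<Longrightarrow> 0 < m \<Longrightarrow> 0 < n \<Longrightarrow> ca_weight k (m * n) = ca_weight k m * ca_weight k n"
  by (simp add: ca_weight_def abundancy_mult power_mult_distrib)

lemma ca_weight_eq_prod_prime_factors:
  assumes "0 < n" "finite P" "\<forall>p\<in>P. prime p" "prime_factors n \<subseteq> P"
  shows "ca_weight k n = (\<Prod>p\<in>P. ca_weight k (p ^ multiplicity p n))"
  by (subst prime_factorization_superset[OF assms])
    (rule multiplicative_prod_prime_powers[OF ca_weight_mult ca_weight_1 assms(2,3)])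

section \<open>Log-concave sequences\<close>

locale log_concave_seq =
  fixes f :: "nat \<Rightarrow> real"
  assumes pos: "0 < f a"
    and log_concave: "f a * f (a + 2) \<le> f (a + 1) ^ 2"
begin

lemma step_down_propagates:
  assumes "f (m + 1) \<le> f m" "m \<le> a"
  shows "f (a + 1) \<le> f a"
  using assms(2)
proof (induction a rule: dec_induct)
  case (step a)
  have "f a * f (a + 2) \<le> f (a + 1) * f (a + 1)"
    using log_concave[of a] by (simp add: power2_eq_square)
  also have "\<dots> \<le> f a * f (a + 1)"
    using step.IH pos[of "a + 1"] by (simp add: mult_right_mono)
  finally show ?case
    using pos[of a] by simp
qed (use assms(1) in simp)

lemma step_up_propagates:
  assumes "f m \<le> f (m + 1)" "a \<le> m"
  shows "f a \<le> f (a + 1)"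
  using assms(2)
proof (induction a rule: inc_induct)
  case (step a)
  have "f a * f (a + 1) \<le> f a * f (a + 2)"
    using step.IH pos[of a] by simp
  also have "\<dots> \<le> f (a + 1) * f (a + 1)"
    using log_concave[of a] by (simp add: power2_eq_square)
  finally show ?case
    using pos[of "a + 1"] by simp
qed (use assms(1) in simp)

lemma antitone_from:
  assumes "f (m + 1) \<le> f m" "m \<le> a" "a \<le> b"
  shows "f b \<le> f a"
  using assms(3)
proof (induction b rule: dec_induct)
  case (step b)
  then show ?case
    using step_down_propagates[OF assms(1), of b] assms(2) by simp
qed simp

lemma mono_upto:
  assumes "f m \<le> f (m + 1)" "a \<le> b" "b \<le> m + 1"
  shows "f a \<le> f b"
  using assms(2,3)
proof (induction b rule: dec_induct)
  case (step b)
  then show ?case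
    using step_up_propagates[OF assms(1), of b] by simp
qed simp

lemma le_peak:
  assumes "r = 0 \<or> f (r - 1) \<le> f r" "f (r + 1) \<le> f r"
  shows "f a \<le> f r"
proof (cases "r \<le> a")
  case True
  then show ?thesis using antitone_from[OF assms(2)] by simp
next
  case False
  then have "f (r - 1) \<le> f (r - 1 + 1)" using assms(1) by simp
  from mono_upto[OF this] False show ?thesis by simp
qed

lemma le_outside_window:
  assumes "r = 0 \<or> f (r - 1) \<le> f r" "f (r + 1) \<le> f r"
    and "lo \<le> r" "r \<le> hi"
    and "lo = 0 \<or> f (lo - 1) \<le> c * f r" "f (hi + 1) \<le> c * f r"
    and "a < lo \<or> hi < a"
  shows "f a \<le> c * f r"
  using assms(7)
proof
  assume "a < lo"
  with assms(1,3,5) have "f (r - 1) \<le> f (r - 1 + 1)" "f (lo - 1) \<le> c * f r" by simp_all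
  moreover from mono_upto[OF this(1), of a "lo - 1"] \<open>a < lo\<close> assms(3)
  have "f a \<le> f (lo - 1)" by simp
  ultimately show ?thesis by simp
next
  assume "hi < a"
  then have "f a \<le> f (hi + 1)"
    using antitone_from[OF assms(2)] assms(4) by simp
  with assms(6) show ?thesis by simp
qed

end

lemma abundancy_prime_power_log_concave:
  assumes "prime p"
  shows "abundancy (p ^ a) * abundancy (p ^ (a + 2)) \<le> abundancy (p ^ (a + 1)) ^ 2"
proof -
  have "sigma (p ^ a) * sigma (p ^ (a + 2)) \<le> sigma (p ^ (a + 1)) ^ 2"
    using sigma_prime_power_log_concave[OF assms, of a] by linarith
  then have "real (sigma (p ^ a)) * real (sigma (p ^ (a + 2))) \<le> real (sigma (p ^ (a + 1))) ^ 2"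
    by (metis of_nat_le_iff of_nat_mult of_nat_power)
  moreover have "real (p ^ a) * real (p ^ (a + 2)) = real (p ^ (a + 1)) ^ 2"
    by (simp add: power2_eq_square flip: power_add)
  ultimately show ?thesis
    unfolding abundancy_def using prime_gt_0_nat[OF assms]
    by (simp add: power_divide divide_right_mono flip: times_divide_times_eq)
qed

lemma log_concave_seq_ca_weight_prime_power:
  assumes "prime p"
  shows "log_concave_seq (\<lambda>a. ca_weight k (p ^ a))"
proof
  fix a
  let ?A = "\<lambda>i. abundancy (p ^ i)"
  show "0 < ca_weight k (p ^ a)"
    using prime_gt_0_nat[OF assms] by (simp add: ca_weight_pos)
  have "0 \<le> ?A a * ?A (a + 2)"
    using prime_gt_0_nat[OF assms] by (intro mult_nonneg_nonneg less_imp_le abundancy_pos) simp_all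
  then have "(?A a * ?A (a + 2)) ^ k \<le> (?A (a + 1) ^ 2) ^ k"
    using abundancy_prime_power_log_concave[OF assms] by (intro power_mono)
  have "ca_weight k (p ^ a) * ca_weight k (p ^ (a + 2))
      = (?A a * ?A (a + 2)) ^ k / (real (p ^ a) * real (p ^ (a + 2)))"
    unfolding ca_weight_def by (simp add: power_mult_distrib)
  also have "\<dots> = (?A a * ?A (a + 2)) ^ k / real (p ^ (a + 1)) ^ 2"
    by (simp add: power2_eq_square flip: power_add)
  also have "\<dots> \<le> (?A (a + 1) ^ 2) ^ k / real (p ^ (a + 1)) ^ 2"
    by (rule divide_right_mono) (fact, simp)
  also have "\<dots> = ca_weight k (p ^ (a + 1)) ^ 2"
    unfolding ca_weight_def by (simp add: power_divide mult.commute flip: power_mult)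
  finally show "ca_weight k (p ^ a) * ca_weight k (p ^ (a + 2)) \<le> ca_weight k (p ^ (a + 1)) ^ 2" .
qed

lemma ca_weight_le_scaled:
  fixes R n q :: nat
  assumes "0 < R" "0 < n" "0 \<le> c" "prime q"
    and peak: "\<And>p a. prime p \<Longrightarrow> ca_weight k (p ^ a) \<le> ca_weight k (p ^ multiplicity p R)"
    and far: "ca_weight k (q ^ multiplicity q n) \<le> c * ca_weight k (q ^ multiplicity q R)"
  shows "ca_weight k n \<le> c * ca_weight k R"
proof -
  define P where "P = insert q (prime_factors n \<union> prime_factors R)"
  have P: "finite P" "\<forall>p\<in>P. prime p" "q \<in> P"
    using \<open>prime q\<close> by (auto simp: P_def)
  let ?wn = "\<lambda>p. ca_weight k (p ^ multiplicity p n)"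
  let ?wR = "\<lambda>p. ca_weight k (p ^ multiplicity p R)"
  have pos: "0 < ca_weight k (p ^ m)" if "p \<in> P" for p m
    using P(2) that by (simp add: ca_weight_pos prime_gt_0_nat)
  have sub: "prime_factors n \<subseteq> P" "prime_factors R \<subseteq> P"
    by (auto simp: P_def)
  have "ca_weight k n = ?wn q * (\<Prod>p\<in>P - {q}. ?wn p)"
    unfolding ca_weight_eq_prod_prime_factors[OF assms(2) P(1,2) sub(1)] by (rule prod.remove[OF P(1,3)])
  also have "\<dots> \<le> (c * ?wR q) * (\<Prod>p\<in>P - {q}. ?wR p)"
    using far peak P pos \<open>0 \<le> c\<close>
    by (intro mult_mono prod_mono prod_nonneg mult_nonneg_nonneg) (auto intro: less_imp_le)
  also have "\<dots> = c * ca_weight k R"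
    unfolding ca_weight_eq_prod_prime_factors[OF assms(1) P(1,2) sub(2)] prod.remove[OF P(1,3)]
    by simp
  finally show ?thesis .
qed

lemma less_scaled_if_abundancy_less:
  assumes "0 < k" "0 < R" "0 < n" "abundancy R < abundancy n"
    and "ca_weight k n \<le> c * ca_weight k R"
  shows "real R < c * real n"
proof -
  let ?a = "abundancy R ^ k"
  have "0 < ?a" using abundancy_pos[OF assms(2)] by simp
  have "?a < abundancy n ^ k"
    using assms(1,4) abundancy_pos[OF assms(2)] by (intro power_strict_mono) simp_all
  then have "?a / real n < ca_weight k n"
    using assms(3) unfolding ca_weight_def by (simp add: divide_strict_right_mono)
  also have "\<dots> \<le> c * (?a / real R)"
    using assms(5) by (simp add: ca_weight_def)
  finally have "?a * real R < ?a * (c * real n)"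
    using assms(2,3) by (simp add: field_simps)
  with \<open>0 < ?a\<close> show ?thesis by simp
qed

lemma ca_weight_prime_antimono:
  assumes "prime p" "prime q" "q \<le> p"
  shows "ca_weight k p \<le> ca_weight k q"
proof -
  have sigma_prime: "sigma r = r + 1" if "prime r" for r
    using sigma_prime_power[OF that, of 1] by simp
  have "0 < q" using prime_gt_0_nat[OF assms(2)] .
  then have "1 + 1 / real p \<le> 1 + 1 / real q"
    using assms(3) by (simp add: frac_le)
  then have "(1 + 1 / real p) ^ k \<le> (1 + 1 / real q) ^ k"
    by (rule power_mono) simp
  moreover have "abundancy r = 1 + 1 / real r" if "prime r" for r
    using sigma_prime[OF that] prime_gt_0_nat[OF that] by (simp add: abundancy_def field_simps)
  ultimately show ?thesis
    unfolding ca_weight_def using assms \<open>0 < q\<close> by (simp add: frac_le)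
qed

section \<open>Certified bounds for the local factors\<close>

text \<open>Upward-rounded fixed-point arithmetic with scale D: a natural m stands for the upper bound m / D.\<close>

lemma le_div_round_up: "0 < (d::nat) \<Longrightarrow> real a / real d \<le> real ((a + d - 1) div d)"
proof -
  assume "0 < d"
  have "(a + d - 1) div d * d + (a + d - 1) mod d = a + d - 1" "(a + d - 1) mod d < d"
    using \<open>0 < d\<close> by simp_all
  then have "a \<le> (a + d - 1) div d * d" by linarith
  then have "real a \<le> real ((a + d - 1) div d) * real d" by (metis of_nat_le_iff of_nat_mult)
  with \<open>0 < d\<close> show ?thesis by (simp add: divide_simps)
qed

definition mul_up :: "nat \<Rightarrow> nat \<Rightarrow> nat \<Rightarrow> nat" where
  "mul_up D x y = (x * y + D - 1) div D"

lemma mul_up_bound: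
  assumes "0 < D"
  shows "real x / real D * (real y / real D) \<le> real (mul_up D x y) / real D"
proof -
  have "real (x * y) / real D \<le> real (mul_up D x y)"
    unfolding mul_up_def using le_div_round_up[OF assms] .
  with assms show ?thesis by (simp add: divide_simps)
qed

definition sq_up :: "nat \<Rightarrow> nat \<Rightarrow> nat" where
  "sq_up D x = mul_up D x x"

fun pow_up :: "nat \<Rightarrow> nat \<Rightarrow> nat \<Rightarrow> nat" where
  "pow_up D m n =
    (if n = 0 then D else mul_up D (sq_up D (pow_up D m (n div 2))) (if even n then D else m))"

declare pow_up.simps [simp del]

lemma pow_up_bound:
  assumes "0 < D" "0 \<le> x" "x \<le> real m / real D"
  shows "x ^ n \<le> real (pow_up D m n) / real D"
proof (induction n rule: less_induct)
  case (less n)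
  show ?case
  proof (cases "n = 0")
    case True
    with assms(1) show ?thesis by (simp add: pow_up.simps)
  next
    case False
    define z where "z = pow_up D m (n div 2)"
    define t where "t = (if even n then D else m)"
    have "x ^ (n div 2) \<le> real z / real D"
      using less.IH False unfolding z_def by simp
    then have "x ^ (n div 2) * x ^ (n div 2) \<le> real z / real D * (real z / real D)"
      using assms(2) by (intro mult_mono) simp_all
    also have "\<dots> \<le> real (sq_up D z) / real D"
      unfolding sq_up_def by (rule mul_up_bound[OF assms(1)])
    finally have "x ^ (2 * (n div 2)) \<le> real (sq_up D z) / real D"
      by (simp add: mult_2 power_add)
    moreover have "x ^ (n mod 2) \<le> real t / real D"
      using assms by (simp add: t_def odd_iff_mod_2_eq_one)
    ultimately have "x ^ (2 * (n div 2)) * x ^ (n mod 2) \<le> real (sq_up D z) / real D * (real t / real D)"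
      using assms(2) by (intro mult_mono) simp_all
    also have "\<dots> \<le> real (pow_up D m n) / real D"
      using False mul_up_bound[OF assms(1)] by (simp add: pow_up.simps[of D m n] z_def t_def)
    finally show ?thesis
      by (simp flip: power_add)
  qed
qed

text \<open>A sufficient condition for \<open>ca_weight k (p ^ a) \<le> c_num / c_den * ca_weight k (p ^ b)\<close>
  that simp can evaluate; \<open>num / den\<close> is \<open>abundancy (p ^ a) / abundancy (p ^ b)\<close>.\<close>
definition weight_ratio_test :: "nat \<Rightarrow> nat \<Rightarrow> nat \<Rightarrow> nat \<Rightarrow> nat \<Rightarrow> nat \<Rightarrow> bool" where
  "weight_ratio_test k p a b c_num c_den \<longleftrightarrow>
    (let D = 2 ^ 24;
         num = (p ^ Suc a - 1) div (p - 1) * p ^ b;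
         den = (p ^ Suc b - 1) div (p - 1) * p ^ a
     in pow_up D ((num * D + den - 1) div den) k * p ^ b * c_den \<le> c_num * D * p ^ a)"

lemma ca_weight_prime_power_le_if_test:
  assumes "prime p" "0 < c_den" "weight_ratio_test k p a b c_num c_den"
  shows "ca_weight k (p ^ a) \<le> real c_num / real c_den * ca_weight k (p ^ b)"
proof -
  define D :: nat where "D = 2 ^ 24"
  define num where "num = sigma (p ^ a) * p ^ b"
  define den where "den = sigma (p ^ b) * p ^ a"
  define m where "m = (num * D + den - 1) div den"
  have p: "0 < p" using prime_gt_0_nat[OF assms(1)] .
  have pos: "0 < D" "0 < den" "0 < sigma (p ^ a)"
    using p by (simp_all add: D_def den_def sigma_pos)
  have test: "pow_up D m k * p ^ b * c_den \<le> c_num * D * p ^ a"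
    using assms(3) unfolding weight_ratio_test_def Let_def
    by (simp add: num_def den_def m_def D_def sigma_prime_power_eq_div[OF assms(1)])
  let ?x = "abundancy (p ^ a) / abundancy (p ^ b)"
  have x_eq: "?x = real num / real den"
    unfolding abundancy_def num_def den_def using p by (simp add: field_simps)
  have "0 \<le> ?x" unfolding x_eq by simp
  moreover have "?x \<le> real m / real D"
    unfolding x_eq m_def using le_div_round_up[OF pos(2), of "num * D"] pos(1) by (simp add: field_simps)
  ultimately have pow: "?x ^ k \<le> real (pow_up D m k) / real D"
    by (rule pow_up_bound[OF pos(1)])
  have w_nonneg: "0 \<le> ca_weight k (p ^ b)"
    using p by (simp add: less_imp_le ca_weight_pos)
  have "ca_weight k (p ^ a) = ?x ^ k * (real (p ^ b) / real (p ^ a)) * ca_weight k (p ^ b)"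
    unfolding ca_weight_def using p abundancy_pos[of "p ^ b"] by (simp add: power_divide field_simps)
  also have "\<dots> \<le> real (pow_up D m k) / real D * (real (p ^ b) / real (p ^ a)) * ca_weight k (p ^ b)"
    using pow w_nonneg by (intro mult_right_mono) simp_all
  also have "\<dots> \<le> real c_num / real c_den * ca_weight k (p ^ b)"
  proof (rule mult_right_mono)
    have "real (pow_up D m k * p ^ b * c_den) \<le> real (c_num * D * p ^ a)"
      using test by (simp only: of_nat_le_iff)
    then show "real (pow_up D m k) / real D * (real (p ^ b) / real (p ^ a)) \<le> real c_num / real c_den"
      using pos(1) assms(2) p by (simp add: field_simps)
  qed (rule w_nonneg)
  finally show ?thesis .
qed

definition window_certificate :: "nat \<Rightarrow> nat \<Rightarrow> nat \<Rightarrow> nat \<Rightarrow> nat \<Rightarrow> nat \<Rightarrow> nat \<Rightarrow> bool" where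
  "window_certificate k p r lo hi c_num c_den \<longleftrightarrow>
    lo \<le> r \<and> r \<le> hi \<and>
    (r = 0 \<or> weight_ratio_test k p (r - 1) r 1 1) \<and> weight_ratio_test k p (r + 1) r 1 1 \<and>
    (lo = 0 \<or> weight_ratio_test k p (lo - 1) r c_num c_den) \<and>
    weight_ratio_test k p (hi + 1) r c_num c_den"

lemma window_certificate_sound:
  assumes "prime p" "0 < c_den" "window_certificate k p r lo hi c_num c_den"
  shows "ca_weight k (p ^ a) \<le> ca_weight k (p ^ r)"
    and "a < lo \<or> hi < a \<Longrightarrow> ca_weight k (p ^ a) \<le> real c_num / real c_den * ca_weight k (p ^ r)"
proof -
  interpret log_concave_seq "\<lambda>a. ca_weight k (p ^ a)"
    by (rule log_concave_seq_ca_weight_prime_power[OF assms(1)])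
  note test = ca_weight_prime_power_le_if_test[OF assms(1)]
  have test_1: "ca_weight k (p ^ a') \<le> ca_weight k (p ^ b')" if "weight_ratio_test k p a' b' 1 1" for a' b'
    using test[OF _ that] by simp
  from assms(3) have c: "lo \<le> r" "r \<le> hi"
    "r = 0 \<or> weight_ratio_test k p (r - 1) r 1 1" "weight_ratio_test k p (r + 1) r 1 1"
    "lo = 0 \<or> weight_ratio_test k p (lo - 1) r c_num c_den" "weight_ratio_test k p (hi + 1) r c_num c_den"
    unfolding window_certificate_def by blast+
  have peak: "r = 0 \<or> ca_weight k (p ^ (r - 1)) \<le> ca_weight k (p ^ r)"
    "ca_weight k (p ^ (r + 1)) \<le> ca_weight k (p ^ r)"
    using c(3) test_1 c(4) by blast+
  then show "ca_weight k (p ^ a) \<le> ca_weight k (p ^ r)"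
    by (rule le_peak)
  show "ca_weight k (p ^ a) \<le> real c_num / real c_den * ca_weight k (p ^ r)" if "a < lo \<or> hi < a"
  proof (rule le_outside_window[OF peak c(1,2) _ _ that])
    show "lo = 0 \<or> ca_weight k (p ^ (lo - 1)) \<le> real c_num / real c_den * ca_weight k (p ^ r)"
      using c(5) test[OF assms(2)] by blast
  qed (rule test[OF assms(2) c(6)])
qed

section \<open>The superabundant number SA106\<close>

abbreviation (input) SA106 :: nat where "SA106 \<equiv> 224403121196654400"
abbreviation (input) SA107 :: nat where "SA107 \<equiv> 448806242393308800"
abbreviation (input) N15 :: nat where "N15 \<equiv> 614889782588491410"

definition small_primes :: "nat list" where
  "small_primes = [2, 3, 5, 7, 11, 13, 17, 19, 23, 29, 31, 37, 41, 43, 47]"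

definition sa106_exponent :: "nat \<Rightarrow> nat" where
  "sa106_exponent p =
    (if p = 2 then 6 else if p = 3 then 4 else if p \<in> {5, 7} then 2
     else if p \<in> {11, 13, 17, 19, 23, 29, 31, 37} then 1 else 0)"

text \<open>SA106 maximises \<open>ca_weight k\<close> for every k from 136 to 154; we take k = 144. Outside
  \<open>[window_lo p, window_hi p]\<close> the local factor \<open>ca_weight 144 (p ^ a)\<close> is at most SA106 / N15
  times its maximum.\<close>
definition window_lo :: "nat \<Rightarrow> nat" where
  "window_lo p =
    (if p = 2 then 5 else if p = 3 then 3 else if p = 5 then 2
     else if p \<in> {7, 11, 13, 17, 19, 23, 29, 31} then 1 else 0)"

definition window_hi :: "nat \<Rightarrow> nat" where
  "window_hi p =
    (if p = 2 then 8 else if p = 3 then 5 else if p = 5 then 3 else if p = 7 then 2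
     else if p \<in> set small_primes then 1 else 0)"

lemma small_primes_prime: "\<forall>p\<in>set small_primes. prime p"
  unfolding small_primes_def by code_simp

lemma prime_less_53_in_small_primes: "\<forall>p<53. prime p \<longrightarrow> p \<in> set small_primes"
  unfolding small_primes_def by code_simp

lemma prime_53: "prime (53::nat)"
  by code_simp

lemma window_certificate_SA106:
  assumes "p \<in> set small_primes"
  shows "window_certificate 144 p (sa106_exponent p) (window_lo p) (window_hi p) SA106 N15"
  using assms unfolding small_primes_def
  \<comment> \<open>\<open>Let\<close> is unfolded first: under its binder simp would expand \<open>pow_up\<close> symbolically.\<close>
  by (simp only: list.set insert_iff empty_iff)
    (elim disjE; simp only: window_certificate_def weight_ratio_test_def Let_def;
      simp add: sa106_exponent_def window_lo_def window_hi_def small_primes_def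
        pow_up.simps sq_up_def mul_up_def)

lemma weight_ratio_test_53: "weight_ratio_test 144 53 1 0 SA106 N15"
  unfolding weight_ratio_test_def Let_def by (simp add: pow_up.simps sq_up_def mul_up_def)

lemma SA106_eq_prod: "SA106 = (\<Prod>p\<in>set small_primes. p ^ sa106_exponent p)"
  by (simp add: small_primes_def sa106_exponent_def)

lemma multiplicity_SA106:
  assumes "prime p"
  shows "multiplicity p SA106 = sa106_exponent p"
proof -
  have "sa106_exponent p = 0" if "p \<notin> set small_primes"
    using that by (auto simp: sa106_exponent_def small_primes_def)
  then show ?thesis
    using small_primes_prime assms
    by (subst SA106_eq_prod, subst multiplicity_prod_prime_powers) auto
qed

lemma ca_weight_prime_ge_53:
  assumes "prime p" "53 \<le> p"
  shows "ca_weight 144 p \<le> real SA106 / real N15"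
proof -
  have "ca_weight 144 (53 ^ 1) \<le> real SA106 / real N15 * ca_weight 144 (53 ^ 0)"
    by (rule ca_weight_prime_power_le_if_test[OF prime_53 _ weight_ratio_test_53]) simp
  then have "ca_weight 144 53 \<le> real SA106 / real N15"
    using ca_weight_1[of 144] by simp
  with ca_weight_prime_antimono[OF assms(1) prime_53 assms(2), where k = 144] show ?thesis
    by linarith
qed

lemma SA106_peak_and_window:
  assumes "prime p"
  shows "ca_weight 144 (p ^ a) \<le> ca_weight 144 (p ^ multiplicity p SA106)"
    and "a < window_lo p \<or> window_hi p < a \<Longrightarrow>
      ca_weight 144 (p ^ a) \<le> real SA106 / real N15 * ca_weight 144 (p ^ multiplicity p SA106)"
proof -
  have "ca_weight 144 (p ^ a) \<le> ca_weight 144 (p ^ sa106_exponent p) \<and>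
    (a < window_lo p \<or> window_hi p < a \<longrightarrow>
      ca_weight 144 (p ^ a) \<le> real SA106 / real N15 * ca_weight 144 (p ^ sa106_exponent p))"
  proof (cases "p \<in> set small_primes")
    case True
    then show ?thesis
      using window_certificate_sound[OF assms _ window_certificate_SA106] by simp
  next
    case False
    then have "53 \<le> p"
      using prime_less_53_in_small_primes assms by (meson not_less)
    with False have zero: "sa106_exponent p = 0" "window_lo p = 0" "window_hi p = 0"
      by (auto simp: sa106_exponent_def window_lo_def window_hi_def small_primes_def)
    interpret log_concave_seq "\<lambda>a. ca_weight 144 (p ^ a)"
      by (rule log_concave_seq_ca_weight_prime_power[OF assms])
    have w0: "ca_weight 144 (p ^ 0) = 1"
      using ca_weight_1 by simp
    have far: "ca_weight 144 (p ^ (0 + 1)) \<le> real SA106 / real N15 * ca_weight 144 (p ^ 0)"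
      using ca_weight_prime_ge_53[OF assms \<open>53 \<le> p\<close>] w0 by simp
    then have peak: "ca_weight 144 (p ^ (0 + 1)) \<le> ca_weight 144 (p ^ 0)"
      using w0 by simp
    have "ca_weight 144 (p ^ a) \<le> ca_weight 144 (p ^ 0)"
      by (rule le_peak[of 0, OF _ peak]) simp
    moreover have "0 < a \<Longrightarrow> ca_weight 144 (p ^ a) \<le> real SA106 / real N15 * ca_weight 144 (p ^ 0)"
      by (rule le_outside_window[of 0 0 0, OF _ peak _ _ _ far]) simp_all
    ultimately show ?thesis
      using zero by simp
  qed
  then show "ca_weight 144 (p ^ a) \<le> ca_weight 144 (p ^ multiplicity p SA106)"
    and "a < window_lo p \<or> window_hi p < a \<Longrightarrow>
      ca_weight 144 (p ^ a) \<le> real SA106 / real N15 * ca_weight 144 (p ^ multiplicity p SA106)"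
    by (simp_all add: multiplicity_SA106[OF assms])
qed

lemma exponent_in_window:
  assumes "0 < n" "n < N15" "abundancy SA106 < abundancy n" "prime p"
  shows "multiplicity p n \<in> {window_lo p..window_hi p}"
proof (rule ccontr)
  assume "multiplicity p n \<notin> {window_lo p..window_hi p}"
  then have far: "ca_weight 144 (p ^ multiplicity p n)
      \<le> real SA106 / real N15 * ca_weight 144 (p ^ multiplicity p SA106)"
    by (intro SA106_peak_and_window(2)[OF assms(4)]) auto
  have "ca_weight 144 n \<le> real SA106 / real N15 * ca_weight 144 SA106"
    using ca_weight_le_scaled[OF _ assms(1) _ assms(4) SA106_peak_and_window(1) far] by simp
  then have "real SA106 < real SA106 / real N15 * real n"
    using assms(1,3) by (intro less_scaled_if_abundancy_less) simp_all
  with assms(2) show False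
    by (simp add: field_simps)
qed

lemma small_primes_distinct: "distinct small_primes"
  by (simp add: small_primes_def)

lemma sigma_small_prime_powers:
  "n = (\<Prod>(p, a)\<leftarrow>zip small_primes es. p ^ a) \<Longrightarrow>
    sigma n = (\<Prod>(p, a)\<leftarrow>zip small_primes es. (p ^ Suc a - 1) div (p - 1))"
  using sigma_prod_list_prime_powers[OF small_primes_distinct small_primes_prime] by simp

lemma sigma_SA106: "sigma SA106 = 1437816604247654400"
  by (subst sigma_small_prime_powers[where es = "[6, 4, 2, 2, 1, 1, 1, 1, 1, 1, 1, 1, 0, 0, 0]"])
    (simp_all add: small_primes_def)

lemma sigma_497325836165558400: "sigma 497325836165558400 = 3190844556877824000"
  by (subst sigma_small_prime_powers[where es = "[7, 4, 2, 2, 1, 1, 1, 1, 1, 1, 1, 0, 1, 0, 0]"])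
    (simp_all add: small_primes_def)

lemma sigma_521585633051683200: "sigma 521585633051683200 = 3342789535776768000"
  by (subst sigma_small_prime_powers[where es = "[7, 4, 2, 2, 1, 1, 1, 1, 1, 1, 1, 0, 0, 1, 0]"])
    (simp_all add: small_primes_def)

text \<open>The \<open>if\<close> makes simp evaluate the abundancy comparison only for the few exponent
  vectors whose product lies in the interval.\<close>
lemma SA106_competitors_enumerated:
  "list_all (\<lambda>es.
     if (\<Prod>(p, a)\<leftarrow>zip small_primes es. p ^ a) \<in> {SA107<..<N15}
     then 1437816604247654400 * (\<Prod>(p, a)\<leftarrow>zip small_primes es. p ^ a)
            < (\<Prod>(p, a)\<leftarrow>zip small_primes es. (p ^ Suc a - 1) div (p - 1)) * SA106
          \<longrightarrow> (\<Prod>(p, a)\<leftarrow>zip small_primes es. p ^ a) \<in> {497325836165558400, 521585633051683200}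
     else True) (product_lists (map (\<lambda>p. [window_lo p..<Suc (window_hi p)]) small_primes))"
  by (simp add: small_primes_def window_lo_def window_hi_def upt_rec)

lemma SA106_competitors:
  assumes "SA107 < n" "n < N15" "abundancy SA106 < abundancy n"
  shows "n \<in> {497325836165558400, 521585633051683200}"
proof -
  have "0 < n" using assms(1) by simp
  define es where "es = map (\<lambda>p. multiplicity p n) small_primes"
  have window: "multiplicity p n \<in> {window_lo p..window_hi p}" if "prime p" for p
    using exponent_in_window[OF \<open>0 < n\<close> assms(2,3) that] .
  have "prime_factors n \<subseteq> set small_primes"
  proof
    fix p assume "p \<in> prime_factors n"
    then have "prime p" "0 < multiplicity p n"
      by (auto simp: prime_factors_multiplicity)
    with window[of p] show "p \<in> set small_primes"
      by (auto simp: window_hi_def small_primes_def split: if_splits)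
  qed
  then have n_eq: "n = (\<Prod>(p, a)\<leftarrow>zip small_primes es. p ^ a)"
    using prime_factorization_superset[OF \<open>0 < n\<close> _ small_primes_prime]
    by (simp add: es_def zip_map2 zip_same_conv_map comp_def
        prod.distinct_set_conv_list[OF small_primes_distinct])
  note sigma_n = sigma_small_prime_powers[OF n_eq]
  have "multiplicity p n \<in> set [window_lo p..<Suc (window_hi p)]" if "p \<in> set small_primes" for p
    using window[of p] small_primes_prime that by (simp del: upt_Suc)
  then have "es \<in> set (product_lists (map (\<lambda>p. [window_lo p..<Suc (window_hi p)]) small_primes))"
    unfolding product_lists_set es_def by (simp add: list.rel_map list_all2_same del: upt_Suc)
  from bspec[OF SA106_competitors_enumerated[unfolded list_all_iff] this] assms(1,2)
  have "sigma SA106 * n < sigma n * SA106 \<longrightarrow> n \<in> {497325836165558400, 521585633051683200}"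
    unfolding sigma_n[symmetric] n_eq[symmetric] sigma_SA106 by simp
  moreover have "sigma SA106 * n < sigma n * SA106"
    using assms(3) abundancy_less_iff[of SA106 n] \<open>0 < n\<close> by simp
  ultimately show ?thesis by blast
qed

lemma abundancy_exceeds_SA106:
  "abundancy SA106 < abundancy 497325836165558400"
  "abundancy SA106 < abundancy 521585633051683200"
  by (simp_all add: abundancy_less_iff sigma_SA106 sigma_497325836165558400 sigma_521585633051683200)

theorem proposition6p1:
  shows "{n::nat. 448806242393308800 < n \<and> n < 614889782588491410 \<and>
            real (sigma n) / real n >
            real (sigma 224403121196654400) / real 224403121196654400}
         = {497325836165558400, 521585633051683200}"
  unfolding abundancy_def[symmetric]
  using SA106_competitors abundancy_exceeds_SA106 by auto

end
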